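(* Let $M$ be a finite abelian group of order $m$ and $J$ a Jacobi function on $M$. Suppose $i\colon\hat{M}\to\hat{M}$ is a bijection with $i(x)=x\,i(x^{-1})$ for all $x\in\hat{M}$, such that $J(\alpha,\beta)=\frac{1}{m}\sum_{x\in\hat{M}}\alpha(i(x))\beta(i(x)x^{-1})$ for all $\alpha,\beta\in M$. Then $M$ is the trivial group.
   Context: $\hat{M}$ is the Pontryagin dual of $M$, written multiplicatively; for $\alpha\in M$, $x\in\hat{M}$, $\alpha(x)$ is the value of the character $x$ at $\alpha$. $\delta(\alpha)=1$ if $\alpha$ is the identity of $M$ and $0$ otherwise. A Jacobi function on $M$ is a function $J\colon M\times M\to\mathbf{C}$ satisfying: (A) $J(\alpha,\beta)=J(\beta,\alpha)$; (B) with $J^*(\alpha,\beta)=-\delta(\alpha)-\delta(\beta)+J(\alpha,\beta)$, $J^*(\alpha,\beta)J^*(\alpha\beta,\gamma)=J^*(\alpha,\beta\gamma)J^*(\beta,\gamma)$; (C) $\sum_{\beta\in M}J(\alpha_1\beta,\alpha_2\beta^{-1})J(\alpha_3\beta,\alpha_4\beta^{-1})=J(\alpha_1\alpha_4,\alpha_2\alpha_3)$; all for all elements of $M$. *)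

theory Defs
  imports "HOL-Algebra.Group" "HOL-Library.FuncSet" Complex_Main
begin

definition characters :: "('a, 'b) monoid_scheme \<Rightarrow> ('a \<Rightarrow> complex) set" where
  "characters M = {\<chi>. \<chi> \<in> extensional (carrier M) \<and>
      (\<forall>a\<in>carrier M. cmod (\<chi> a) = 1) \<and>
      (\<forall>a\<in>carrier M. \<forall>b\<in>carrier M. \<chi> (a \<otimes>\<^bsub>M\<^esub> b) = \<chi> a * \<chi> b)}"

definition char_mult :: "('a, 'b) monoid_scheme \<Rightarrow> ('a \<Rightarrow> complex) \<Rightarrow> ('a \<Rightarrow> complex) \<Rightarrow> ('a \<Rightarrow> complex)" where
  "char_mult M x y = (\<lambda>a\<in>carrier M. x a * y a)"

definition char_inv :: "('a, 'b) monoid_scheme \<Rightarrow> ('a \<Rightarrow> complex) \<Rightarrow> ('a \<Rightarrow> complex)" where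
  "char_inv M x = (\<lambda>a\<in>carrier M. inverse (x a))"

definition delta :: "('a, 'b) monoid_scheme \<Rightarrow> 'a \<Rightarrow> complex" where
  "delta M a = (if a = \<one>\<^bsub>M\<^esub> then 1 else 0)"

definition Jstar :: "('a, 'b) monoid_scheme \<Rightarrow> ('a \<Rightarrow> 'a \<Rightarrow> complex) \<Rightarrow> 'a \<Rightarrow> 'a \<Rightarrow> complex" where
  "Jstar M J a b = - delta M a - delta M b + J a b"

definition jacobi_function :: "('a, 'b) monoid_scheme \<Rightarrow> ('a \<Rightarrow> 'a \<Rightarrow> complex) \<Rightarrow> bool" where
  "jacobi_function M J \<longleftrightarrow>
     (\<forall>a\<in>carrier M. \<forall>b\<in>carrier M. J a b = J b a) \<and>
     (\<forall>a\<in>carrier M. \<forall>b\<in>carrier M. \<forall>c\<in>carrier M.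
        Jstar M J a b * Jstar M J (a \<otimes>\<^bsub>M\<^esub> b) c = Jstar M J a (b \<otimes>\<^bsub>M\<^esub> c) * Jstar M J b c) \<and>
     (\<forall>a1\<in>carrier M. \<forall>a2\<in>carrier M. \<forall>a3\<in>carrier M. \<forall>a4\<in>carrier M.
        (\<Sum>b\<in>carrier M. J (a1 \<otimes>\<^bsub>M\<^esub> b) (a2 \<otimes>\<^bsub>M\<^esub> inv\<^bsub>M\<^esub> b) *
                         J (a3 \<otimes>\<^bsub>M\<^esub> b) (a4 \<otimes>\<^bsub>M\<^esub> inv\<^bsub>M\<^esub> b))
        = J (a1 \<otimes>\<^bsub>M\<^esub> a4) (a2 \<otimes>\<^bsub>M\<^esub> a3))"

end

theory Submission
  imports Defs "HOL-Algebra.Multiplicative_Group"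
begin

(* Write m = |M| and sigma = (i^-1 1)^-1. The Fourier form of J gives sum_a J(a,d) = sigma(d), and
   i(sigma) = sigma. Summing axiom (B) over the first argument expresses S(b,c) = sum_a J(a,b) J(ab,c)
   as sigma(bc) J(b,c) plus delta-terms whose Fourier coefficients on M x M cancel. Both S and
   sigma(bc) J(b,c) are sums of products of characters, S over the pairs (y,z) with i(y) i(z) = 1 and
   sigma(bc) J(b,c) over single characters, so comparing Fourier coefficients shows: every character x
   yields a pair (y,z) with i(y) i(z) = 1, i(y^-1) i(z) = i(x) sigma and i(z^-1) = i(x^-1) sigma.
   Taking x = sigma forces sigma = 1, and then every x is forced to be 1. Hence J is the constant 1/m,
   and (B) at (1,1,c) with c <> 1 forces m = 1.
   Only axiom (B) is used, and only orthogonality in the group variable, never that M has m characters. *)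

lemma characters_nonzero: "\<chi> \<in> characters M \<Longrightarrow> a \<in> carrier M \<Longrightarrow> \<chi> a \<noteq> 0"
  unfolding characters_def by force

lemma characters_mult: "\<chi> \<in> characters M \<Longrightarrow> a \<in> carrier M \<Longrightarrow> b \<in> carrier M \<Longrightarrow>
    \<chi> (a \<otimes>\<^bsub>M\<^esub> b) = \<chi> a * \<chi> b"
  unfolding characters_def by blast

lemma characters_eqI:
  assumes "\<chi> \<in> characters M" "\<psi> \<in> characters M" "\<And>a. a \<in> carrier M \<Longrightarrow> \<chi> a = \<psi> a"
  shows "\<chi> = \<psi>"
  using assms unfolding characters_def by (auto intro: extensionalityI)

definition dual_group :: "('a, 'b) monoid_scheme \<Rightarrow> ('a \<Rightarrow> complex) monoid" where
  "dual_group M = \<lparr>carrier = characters M, mult = char_mult M, one = (\<lambda>a\<in>carrier M. 1)\<rparr>"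

lemma carrier_dual_group [simp]: "carrier (dual_group M) = characters M"
  by (simp add: dual_group_def)

lemma mult_dual_group: "x \<otimes>\<^bsub>dual_group M\<^esub> y = char_mult M x y"
  by (simp add: dual_group_def)

lemma one_dual_group_apply: "a \<in> carrier M \<Longrightarrow> \<one>\<^bsub>dual_group M\<^esub> a = 1"
  by (simp add: dual_group_def)

lemma char_mult_apply: "a \<in> carrier M \<Longrightarrow> char_mult M x y a = x a * y a"
  by (simp add: char_mult_def)

lemma char_inv_apply: "a \<in> carrier M \<Longrightarrow> char_inv M x a = inverse (x a)"
  by (simp add: char_inv_def)

context group
begin

lemma character_one: "\<chi> \<in> characters G \<Longrightarrow> \<chi> \<one> = 1"
  using characters_mult[of \<chi> G \<one> \<one>] characters_nonzero[of \<chi> G \<one>] by simp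

lemma character_inv: "\<chi> \<in> characters G \<Longrightarrow> a \<in> carrier G \<Longrightarrow> \<chi> (inv a) = inverse (\<chi> a)"
  using characters_mult[of \<chi> G a "inv a"] character_one[of \<chi>] by (simp add: inverse_unique)

lemma character_pow: "\<chi> \<in> characters G \<Longrightarrow> a \<in> carrier G \<Longrightarrow> \<chi> (a [^] (k::nat)) = \<chi> a ^ k"
  by (induction k) (simp_all add: character_one characters_mult mult.commute)

lemma one_dual_group_in_characters: "\<one>\<^bsub>dual_group G\<^esub> \<in> characters G"
  by (auto simp: dual_group_def characters_def)

lemma char_inv_in_characters: "\<chi> \<in> characters G \<Longrightarrow> char_inv G \<chi> \<in> characters G"
  by (auto simp: characters_def char_inv_def norm_inverse)

lemma char_inv_l_inv: "\<chi> \<in> characters G \<Longrightarrow> char_inv G \<chi> \<otimes>\<^bsub>dual_group G\<^esub> \<chi> = \<one>\<^bsub>dual_group G\<^esub>"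
  using characters_nonzero[of \<chi> G] by (auto simp: char_mult_def char_inv_def dual_group_def)

lemma comm_group_dual_group: "comm_group (dual_group G)"
proof (rule group.group_comm_groupI)
  show "group (dual_group G)"
  proof (rule groupI)
    fix x y assume "x \<in> carrier (dual_group G)" "y \<in> carrier (dual_group G)"
    then show "x \<otimes>\<^bsub>dual_group G\<^esub> y \<in> carrier (dual_group G)"
      by (auto simp: characters_def mult_dual_group char_mult_def norm_mult)
  next
    fix x assume "x \<in> carrier (dual_group G)"
    then show "\<one>\<^bsub>dual_group G\<^esub> \<otimes>\<^bsub>dual_group G\<^esub> x = x"
      by (intro characters_eqI) (auto simp: characters_def char_mult_def dual_group_def)
  next
    fix x assume "x \<in> carrier (dual_group G)"
    then show "\<exists>y\<in>carrier (dual_group G). y \<otimes>\<^bsub>dual_group G\<^esub> x = \<one>\<^bsub>dual_group G\<^esub>"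
      using char_inv_in_characters char_inv_l_inv by auto
  qed (auto simp: mult_dual_group char_mult_def one_dual_group_in_characters)
qed (auto simp: mult_dual_group char_mult_def)

lemma inv_dual_group: "\<chi> \<in> characters G \<Longrightarrow> inv\<^bsub>dual_group G\<^esub> \<chi> = char_inv G \<chi>"
  using group.inv_equality[OF comm_group.axioms(2)[OF comm_group_dual_group]]
    char_inv_in_characters char_inv_l_inv by simp

lemma cocycle_identity_expanded:
  assumes "jacobi_function G J" "a \<in> carrier G" "b \<in> carrier G" "c \<in> carrier G"
  shows "J a b * J (a \<otimes> b) c - J a b * delta G (a \<otimes> b) + delta G a * delta G b
       = J a (b \<otimes> c) * J b c - J b c * delta G (b \<otimes> c) + delta G b * delta G c"
proof -
  have "Jstar G J a b * Jstar G J (a \<otimes> b) c = Jstar G J a (b \<otimes> c) * Jstar G J b c"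
    using assms unfolding jacobi_function_def by blast
  then show ?thesis
    using assms(2-4)
    by (cases "a = \<one>"; cases "b = \<one>"; cases "c = \<one>") (simp_all add: Jstar_def delta_def algebra_simps)
qed

lemma jacobi_function_constant:
  assumes "jacobi_function G J" "\<And>a b. a \<in> carrier G \<Longrightarrow> b \<in> carrier G \<Longrightarrow> J a b = k"
    and "c \<in> carrier G" "c \<noteq> \<one>"
  shows "k = 1"
proof -
  have "Jstar G J \<one> \<one> * Jstar G J (\<one> \<otimes> \<one>) c = Jstar G J \<one> (\<one> \<otimes> c) * Jstar G J \<one> c"
    using assms(1,3) unfolding jacobi_function_def by blast
  then have "(k - 2) * (k - 1) = (k - 1) * (k - 1)"
    using assms(2-4) by (simp add: Jstar_def delta_def algebra_simps)
  then show ?thesis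
    by (simp add: algebra_simps)
qed

end

definition fourier_coeff ::
    "('a, 'b) monoid_scheme \<Rightarrow> ('a \<Rightarrow> 'a \<Rightarrow> complex) \<Rightarrow> ('a \<Rightarrow> complex) \<Rightarrow> ('a \<Rightarrow> complex) \<Rightarrow> complex"
  where "fourier_coeff M f \<beta> \<gamma> = (\<Sum>b\<in>carrier M. \<Sum>c\<in>carrier M. inverse (\<beta> b) * inverse (\<gamma> c) * f b c)"

lemma fourier_coeff_add:
  "fourier_coeff M (\<lambda>b c. f b c + g b c) \<beta> \<gamma> = fourier_coeff M f \<beta> \<gamma> + fourier_coeff M g \<beta> \<gamma>"
  by (simp add: fourier_coeff_def distrib_left sum.distrib)

lemma fourier_coeff_diff:
  "fourier_coeff M (\<lambda>b c. f b c - g b c) \<beta> \<gamma> = fourier_coeff M f \<beta> \<gamma> - fourier_coeff M g \<beta> \<gamma>"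
  by (simp add: fourier_coeff_def right_diff_distrib sum_subtractf)

lemma fourier_coeff_cmult: "fourier_coeff M (\<lambda>b c. k * f b c) \<beta> \<gamma> = k * fourier_coeff M f \<beta> \<gamma>"
  by (simp add: fourier_coeff_def sum_distrib_left mult_ac)

lemma fourier_coeff_cong:
  "(\<And>b c. b \<in> carrier M \<Longrightarrow> c \<in> carrier M \<Longrightarrow> f b c = g b c) \<Longrightarrow> fourier_coeff M f \<beta> \<gamma> = fourier_coeff M g \<beta> \<gamma>"
  by (simp add: fourier_coeff_def)

lemma fourier_coeff_indep_second:
  "fourier_coeff M (\<lambda>b c. f b) \<beta> \<gamma> = (\<Sum>b\<in>carrier M. inverse (\<beta> b) * f b) * (\<Sum>c\<in>carrier M. inverse (\<gamma> c))"
  unfolding fourier_coeff_def sum_product by (simp add: mult_ac)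

locale finite_group = group +
  assumes finite_carrier: "finite (carrier G)"
begin

lemma finite_characters: "finite (characters G)"
proof (rule finite_subset)
  show "characters G \<subseteq> (carrier G \<rightarrow>\<^sub>E {z. z ^ order G = 1})"
    using pow_order_eq_1 character_pow character_one by (auto simp: characters_def extensional_def)
  show "finite (carrier G \<rightarrow>\<^sub>E {z::complex. z ^ order G = 1})"
    using finite_carrier order_gt_0_iff_finite by (intro finite_PiE finite_roots_unity) auto
qed

lemma sum_character:
  assumes "\<chi> \<in> characters G"
  shows "(\<Sum>a\<in>carrier G. \<chi> a) = (if \<chi> = \<one>\<^bsub>dual_group G\<^esub> then of_nat (card (carrier G)) else 0)"
proof (cases "\<chi> = \<one>\<^bsub>dual_group G\<^esub>")
  case True
  then show ?thesis by (simp add: one_dual_group_apply)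
next
  case False
  then obtain b where b: "b \<in> carrier G" "\<chi> b \<noteq> 1"
    using assms one_dual_group_in_characters by (metis characters_eqI one_dual_group_apply)
  have "(\<Sum>a\<in>carrier G. \<chi> a) = (\<Sum>a\<in>carrier G. \<chi> (b \<otimes> a))"
    using sum.reindex[OF inj_on_cmult[OF b(1)], of \<chi>] by (simp add: surj_const_mult[OF b(1)])
  also have "\<dots> = \<chi> b * (\<Sum>a\<in>carrier G. \<chi> a)"
    by (simp add: sum_distrib_left characters_mult[OF assms b(1)])
  finally have "(1 - \<chi> b) * (\<Sum>a\<in>carrier G. \<chi> a) = 0"
    by (simp add: algebra_simps)
  then show ?thesis using b False by simp
qed

lemma character_orthogonality:
  assumes "\<phi> \<in> characters G" "\<psi> \<in> characters G"
  shows "(\<Sum>a\<in>carrier G. \<phi> a * inverse (\<psi> a)) = (if \<phi> = \<psi> then of_nat (card (carrier G)) else 0)"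
proof -
  interpret D: comm_group "dual_group G" by (rule comm_group_dual_group)
  define \<chi> where "\<chi> = \<phi> \<otimes>\<^bsub>dual_group G\<^esub> inv\<^bsub>dual_group G\<^esub> \<psi>"
  have "\<chi> \<in> characters G"
    unfolding \<chi>_def using assms by (metis D.m_closed D.inv_closed carrier_dual_group)
  moreover have "\<chi> = \<one>\<^bsub>dual_group G\<^esub> \<longleftrightarrow> \<phi> = \<psi>"
    unfolding \<chi>_def using assms by (metis D.inv_closed D.inv_equality D.inv_inv D.r_inv carrier_dual_group)
  moreover have "(\<Sum>a\<in>carrier G. \<phi> a * inverse (\<psi> a)) = (\<Sum>a\<in>carrier G. \<chi> a)"
    unfolding \<chi>_def using assms by (simp add: inv_dual_group mult_dual_group char_mult_apply char_inv_apply)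
  ultimately show ?thesis
    by (simp add: sum_character)
qed

lemma sum_character_mult:
  assumes "\<phi> \<in> characters G" "\<psi> \<in> characters G"
  shows "(\<Sum>a\<in>carrier G. \<phi> a * \<psi> a)
       = (if \<phi> = inv\<^bsub>dual_group G\<^esub> \<psi> then of_nat (card (carrier G)) else 0)"
  using assms character_orthogonality[OF assms(1) char_inv_in_characters[OF assms(2)]]
  by (simp add: inv_dual_group char_inv_apply)

lemma sum_character_delta: "\<beta> \<in> characters G \<Longrightarrow> (\<Sum>b\<in>carrier G. inverse (\<beta> b) * delta G b) = 1"
  by (simp add: delta_def character_one finite_carrier if_distrib cong: if_cong)

lemma fourier_coeff_delta_delta:
  "\<beta> \<in> characters G \<Longrightarrow> \<gamma> \<in> characters G \<Longrightarrow> fourier_coeff G (\<lambda>b c. delta G b * delta G c) \<beta> \<gamma> = 1"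
proof -
  assume "\<beta> \<in> characters G" "\<gamma> \<in> characters G"
  moreover have "fourier_coeff G (\<lambda>b c. delta G b * delta G c) \<beta> \<gamma>
      = (\<Sum>b\<in>carrier G. inverse (\<beta> b) * delta G b) * (\<Sum>c\<in>carrier G. inverse (\<gamma> c) * delta G c)"
    unfolding fourier_coeff_def sum_product by (simp add: mult_ac)
  ultimately show ?thesis by (simp add: sum_character_delta)
qed

lemma fourier_coeff_delta_first:
  "\<beta> \<in> characters G \<Longrightarrow> fourier_coeff G (\<lambda>b c. delta G b) \<beta> \<gamma> = (\<Sum>c\<in>carrier G. inverse (\<gamma> c))"
  by (simp add: fourier_coeff_indep_second sum_character_delta)

lemma fourier_coeff_character_pairs:
  assumes "finite X" "\<phi> ` X \<subseteq> characters G" "\<psi> ` X \<subseteq> characters G"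
    and "\<beta> \<in> characters G" "\<gamma> \<in> characters G"
  shows "fourier_coeff G (\<lambda>b c. \<Sum>x\<in>X. \<phi> x b * \<psi> x c) \<beta> \<gamma>
       = of_nat (card (carrier G)) ^ 2 * of_nat (card {x\<in>X. \<phi> x = \<beta> \<and> \<psi> x = \<gamma>})"
proof -
  have "fourier_coeff G (\<lambda>b c. \<Sum>x\<in>X. \<phi> x b * \<psi> x c) \<beta> \<gamma>
      = (\<Sum>b\<in>carrier G. \<Sum>c\<in>carrier G. \<Sum>x\<in>X. (\<phi> x b * inverse (\<beta> b)) * (\<psi> x c * inverse (\<gamma> c)))"
    unfolding fourier_coeff_def by (simp add: sum_distrib_left mult_ac)
  also have "\<dots> = (\<Sum>x\<in>X. \<Sum>b\<in>carrier G. \<Sum>c\<in>carrier G. (\<phi> x b * inverse (\<beta> b)) * (\<psi> x c * inverse (\<gamma> c)))"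
    by (simp only: sum.swap[of _ "carrier G" X])
  also have "\<dots> = (\<Sum>x\<in>X. (\<Sum>b\<in>carrier G. \<phi> x b * inverse (\<beta> b)) * (\<Sum>c\<in>carrier G. \<psi> x c * inverse (\<gamma> c)))"
    by (simp only: sum_product)
  also have "\<dots> = (\<Sum>x\<in>X. if \<phi> x = \<beta> \<and> \<psi> x = \<gamma> then of_nat (card (carrier G)) ^ 2 else 0)"
    using assms by (intro sum.cong) (auto simp: character_orthogonality power2_eq_square)
  also have "\<dots> = of_nat (card (carrier G)) ^ 2 * of_nat (card {x\<in>X. \<phi> x = \<beta> \<and> \<psi> x = \<gamma>})"
    using assms(1) by (simp add: sum.inter_filter[symmetric])
  finally show ?thesis .
qed

lemma cocycle_identity_summed:
  assumes "jacobi_function G J" "b \<in> carrier G" "c \<in> carrier G"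
  shows "(\<Sum>a\<in>carrier G. J a b * J (a \<otimes> b) c)
       = (\<Sum>a\<in>carrier G. J a (b \<otimes> c)) * J b c
         + of_nat (card (carrier G)) * (delta G b * delta G c)
         - of_nat (card (carrier G)) * (J b c * delta G (b \<otimes> c))
         - delta G b + J (inv b) b"
proof -
  have summed: "(\<Sum>a\<in>carrier G. J a b * J (a \<otimes> b) c - J a b * delta G (a \<otimes> b) + delta G a * delta G b)
      = (\<Sum>a\<in>carrier G. J a (b \<otimes> c) * J b c - J b c * delta G (b \<otimes> c) + delta G b * delta G c)"
    using cocycle_identity_expanded[OF assms(1) _ assms(2,3)] by (intro sum.cong) auto
  have inv_term: "(\<Sum>a\<in>carrier G. J a b * delta G (a \<otimes> b)) = J (inv b) b"
  proof -
    have "a \<otimes> b = \<one> \<longleftrightarrow> a = inv b" if "a \<in> carrier G" for a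
      using that assms(2) by (metis inv_equality l_inv)
    then have "(\<Sum>a\<in>carrier G. J a b * delta G (a \<otimes> b)) = (\<Sum>a\<in>carrier G. if a = inv b then J a b else 0)"
      by (intro sum.cong) (auto simp: delta_def)
    then show ?thesis
      using assms(2) by (simp add: finite_carrier)
  qed
  have delta_term: "(\<Sum>a\<in>carrier G. delta G a * delta G b) = delta G b"
    unfolding sum_distrib_right[symmetric] by (simp add: delta_def finite_carrier)
  have "(\<Sum>a\<in>carrier G. J a (b \<otimes> c) * J b c) = (\<Sum>a\<in>carrier G. J a (b \<otimes> c)) * J b c"
    by (simp add: sum_distrib_right)
  with summed have "(\<Sum>a\<in>carrier G. J a b * J (a \<otimes> b) c) - J (inv b) b + delta G b
      = (\<Sum>a\<in>carrier G. J a (b \<otimes> c)) * J b c - of_nat (card (carrier G)) * (J b c * delta G (b \<otimes> c))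
        + of_nat (card (carrier G)) * (delta G b * delta G c)"
    by (simp only: sum.distrib sum_subtractf inv_term delta_term sum_constant)
  then show ?thesis
    by (simp add: algebra_simps)
qed

end

locale fourier_jacobi =
  fixes M :: "('a, 'b) monoid_scheme" (structure) and J :: "'a \<Rightarrow> 'a \<Rightarrow> complex"
    and i :: "('a \<Rightarrow> complex) \<Rightarrow> ('a \<Rightarrow> complex)"
  assumes comm_group: "comm_group M"
    and finite_carrier: "finite (carrier M)"
    and jacobi: "jacobi_function M J"
    and bij: "bij_betw i (characters M) (characters M)"
    and i_split: "\<forall>x\<in>characters M. i x = char_mult M x (i (char_inv M x))"
    and J_fourier: "\<forall>a\<in>carrier M. \<forall>b\<in>carrier M.
           J a b = (1 / of_nat (card (carrier M))) *
             (\<Sum>x\<in>characters M. i x a * char_mult M (i x) (char_inv M x) b)"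

sublocale fourier_jacobi \<subseteq> finite_group M
  using comm_group finite_carrier by (simp add: finite_group_def finite_group_axioms_def comm_group_def)

sublocale fourier_jacobi \<subseteq> dual: comm_group "dual_group M"
  by (rule comm_group_dual_group)

context fourier_jacobi
begin

abbreviation Mhat where "Mhat \<equiv> dual_group M"

lemmas dual_closed [simp] = dual.one_closed[simplified] dual.inv_closed[simplified] dual.m_closed[simplified]

lemma card_carrier_pos: "0 < card (carrier M)"
  using finite_carrier by (auto simp: card_gt_0_iff)

lemma i_in_characters: "x \<in> characters M \<Longrightarrow> i x \<in> characters M"
  using bij by (rule bij_betw_apply)

lemma i_eq_iff: "x \<in> characters M \<Longrightarrow> y \<in> characters M \<Longrightarrow> i x = i y \<longleftrightarrow> x = y"
  using bij by (auto simp: bij_betw_def inj_on_def)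

lemma i_inv_in_characters: "x \<in> characters M \<Longrightarrow> i (inv\<^bsub>Mhat\<^esub> x) \<in> characters M"
  using i_in_characters dual.inv_closed by simp

lemma i_mult_inv: "x \<in> characters M \<Longrightarrow> i x \<otimes>\<^bsub>Mhat\<^esub> inv\<^bsub>Mhat\<^esub> x = i (inv\<^bsub>Mhat\<^esub> x)"
  using i_split dual.inv_closed i_inv_in_characters
  by (metis carrier_dual_group dual.inv_solve_right' dual.m_comm inv_dual_group mult_dual_group)

lemma J_eq:
  assumes "a \<in> carrier M" "b \<in> carrier M"
  shows "J a b = (1 / of_nat (card (carrier M))) * (\<Sum>x\<in>characters M. i x a * i (inv\<^bsub>Mhat\<^esub> x) b)"
  using J_fourier assms i_mult_inv by (simp add: inv_dual_group mult_dual_group)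

lemma i_apply:
  "x \<in> characters M \<Longrightarrow> a \<in> carrier M \<Longrightarrow> i x a = x a * i (inv\<^bsub>Mhat\<^esub> x) a"
  using i_split by (simp add: inv_dual_group char_mult_apply)

definition \<sigma> where "\<sigma> = inv\<^bsub>Mhat\<^esub> (inv_into (characters M) i \<one>\<^bsub>Mhat\<^esub>)"

lemma sigma_in_characters: "\<sigma> \<in> characters M"
  and i_inv_sigma: "i (inv\<^bsub>Mhat\<^esub> \<sigma>) = \<one>\<^bsub>Mhat\<^esub>"
proof -
  have "\<one>\<^bsub>Mhat\<^esub> \<in> i ` characters M"
    using bij dual.one_closed by (simp add: bij_betw_def)
  then have "inv_into (characters M) i \<one>\<^bsub>Mhat\<^esub> \<in> characters M"
    and "i (inv_into (characters M) i \<one>\<^bsub>Mhat\<^esub>) = \<one>\<^bsub>Mhat\<^esub>"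
    by (simp_all add: inv_into_into f_inv_into_f)
  then show "\<sigma> \<in> characters M" "i (inv\<^bsub>Mhat\<^esub> \<sigma>) = \<one>\<^bsub>Mhat\<^esub>"
    by (simp_all add: \<sigma>_def)
qed

lemma i_sigma: "i \<sigma> = \<sigma>"
  using i_mult_inv[of "inv\<^bsub>Mhat\<^esub> \<sigma>"] sigma_in_characters i_inv_sigma by simp

lemma sum_J_first_argument:
  assumes "d \<in> carrier M"
  shows "(\<Sum>a\<in>carrier M. J a d) = \<sigma> d"
proof -
  have "(\<Sum>a\<in>carrier M. J a d)
      = (1 / of_nat (card (carrier M))) * (\<Sum>x\<in>characters M. (\<Sum>a\<in>carrier M. i x a) * i (inv\<^bsub>Mhat\<^esub> x) d)"
    using assms by (simp add: J_eq sum_distrib_left sum_distrib_right sum.swap[of _ "carrier M"])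
  also have "\<dots> = (1 / of_nat (card (carrier M))) *
      (\<Sum>x\<in>characters M. if x = inv\<^bsub>Mhat\<^esub> \<sigma> then of_nat (card (carrier M)) * i (inv\<^bsub>Mhat\<^esub> x) d else 0)"
    using i_eq_iff[of _ "inv\<^bsub>Mhat\<^esub> \<sigma>"] sigma_in_characters i_inv_sigma
    by (intro arg_cong[where f = "(*) _"] sum.cong) (auto simp: sum_character i_in_characters)
  also have "\<dots> = \<sigma> d"
    using card_carrier_pos sigma_in_characters finite_characters i_sigma by simp
  finally show ?thesis .
qed

lemma J_inv_right:
  assumes "b \<in> carrier M"
  shows "J b (inv b) = (1 / of_nat (card (carrier M))) * (\<Sum>x\<in>characters M. x b)"
proof -
  have "i x b * i (inv\<^bsub>Mhat\<^esub> x) (inv b) = x b" if "x \<in> characters M" for x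
    using characters_nonzero[OF i_inv_in_characters[OF that] assms]
    by (simp add: i_apply[OF that assms] character_inv assms i_inv_in_characters that)
  then show ?thesis
    using assms by (simp add: J_eq)
qed

lemma J_inv_left:
  assumes "b \<in> carrier M"
  shows "J (inv b) b = (1 / of_nat (card (carrier M))) * (\<Sum>x\<in>characters M. inverse (x b))"
proof -
  have "i x (inv b) * i (inv\<^bsub>Mhat\<^esub> x) b = inverse (x b)" if "x \<in> characters M" for x
    using that assms characters_nonzero[OF i_inv_in_characters[OF that] assms]
    by (simp add: i_apply[OF that assms] character_inv i_in_characters)
  then show ?thesis
    using assms by (simp add: J_eq)
qed

lemma fourier_coeff_J_delta:
  assumes "\<beta> \<in> characters M" "\<gamma> \<in> characters M"
  shows "fourier_coeff M (\<lambda>b c. J b c * delta M (b \<otimes> c)) \<beta> \<gamma> = 1"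
proof -
  let ?m = "of_nat (card (carrier M)) :: complex"
  have "b \<otimes> c = \<one> \<longleftrightarrow> c = inv b" if "b \<in> carrier M" "c \<in> carrier M" for b c
    using that by (metis inv_equality inv_inv inv_closed r_inv)
  then have "fourier_coeff M (\<lambda>b c. J b c * delta M (b \<otimes> c)) \<beta> \<gamma>
      = (\<Sum>b\<in>carrier M. inverse (\<beta> b) * inverse (\<gamma> (inv b)) * J b (inv b))"
    unfolding fourier_coeff_def delta_def
    by (intro sum.cong refl) (simp add: if_distrib finite_carrier cong: if_cong)
  also have "\<dots> = (1 / ?m) * (\<Sum>x\<in>characters M. \<Sum>b\<in>carrier M.
      x b * inverse ((\<beta> \<otimes>\<^bsub>Mhat\<^esub> inv\<^bsub>Mhat\<^esub> \<gamma>) b))"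
    using assms
    by (simp add: J_inv_right character_inv sum_distrib_left sum.swap[of _ "carrier M"]
        mult_dual_group char_mult_apply inv_dual_group char_inv_apply sum_divide_distrib mult_ac)
  also have "\<dots> = (1 / ?m) * (\<Sum>x\<in>characters M. if x = \<beta> \<otimes>\<^bsub>Mhat\<^esub> inv\<^bsub>Mhat\<^esub> \<gamma> then ?m else 0)"
    using assms by (simp add: character_orthogonality)
  also have "\<dots> = 1"
    using assms card_carrier_pos by (simp add: finite_characters)
  finally show ?thesis .
qed

lemma fourier_coeff_J_inv_left:
  assumes "\<beta> \<in> characters M"
  shows "fourier_coeff M (\<lambda>b c. J (inv b) b) \<beta> \<gamma> = (\<Sum>c\<in>carrier M. inverse (\<gamma> c))"
proof -
  let ?m = "of_nat (card (carrier M)) :: complex"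
  have "(\<Sum>b\<in>carrier M. inverse (\<beta> b) * J (inv b) b)
      = (1 / ?m) * (\<Sum>x\<in>characters M. \<Sum>b\<in>carrier M. (inv\<^bsub>Mhat\<^esub> \<beta>) b * inverse (x b))"
    using assms
    by (simp add: J_inv_left sum_distrib_left sum.swap[of _ "carrier M"] inv_dual_group char_inv_apply mult_ac)
  also have "\<dots> = (1 / ?m) * (\<Sum>x\<in>characters M. if x = inv\<^bsub>Mhat\<^esub> \<beta> then ?m else 0)"
    using assms by (auto simp: character_orthogonality intro!: sum.cong)
  also have "\<dots> = 1"
    using assms card_carrier_pos by (simp add: finite_characters)
  finally show ?thesis
    by (simp add: fourier_coeff_indep_second)
qed

lemma fourier_coeff_sum_J_J:
  assumes "\<beta> \<in> characters M" "\<gamma> \<in> characters M"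
  shows "fourier_coeff M (\<lambda>b c. \<Sum>a\<in>carrier M. J a b * J (a \<otimes> b) c) \<beta> \<gamma>
       = fourier_coeff M (\<lambda>b c. \<sigma> (b \<otimes> c) * J b c) \<beta> \<gamma>"
proof -
  let ?m = "of_nat (card (carrier M)) :: complex"
  have "fourier_coeff M (\<lambda>b c. \<Sum>a\<in>carrier M. J a b * J (a \<otimes> b) c) \<beta> \<gamma>
      = fourier_coeff M (\<lambda>b c. \<sigma> (b \<otimes> c) * J b c + ?m * (delta M b * delta M c)
          - ?m * (J b c * delta M (b \<otimes> c)) - delta M b + J (inv b) b) \<beta> \<gamma>"
    by (intro fourier_coeff_cong) (simp add: cocycle_identity_summed[OF jacobi] sum_J_first_argument)
  also have "\<dots> = fourier_coeff M (\<lambda>b c. \<sigma> (b \<otimes> c) * J b c) \<beta> \<gamma>"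
    using assms
    by (simp only: fourier_coeff_add fourier_coeff_diff fourier_coeff_cmult fourier_coeff_delta_delta
        fourier_coeff_J_delta fourier_coeff_J_inv_left fourier_coeff_delta_first) simp
  finally show ?thesis .
qed

lemma J_mult_J_as_double_sum:
  assumes "a \<in> carrier M" "b \<in> carrier M" "c \<in> carrier M"
  shows "J a b * J (a \<otimes> b) c = (1 / of_nat (card (carrier M))) ^ 2 *
    (\<Sum>x\<in>characters M. \<Sum>y\<in>characters M.
       (i x a * i y a) * ((i (inv\<^bsub>Mhat\<^esub> x) \<otimes>\<^bsub>Mhat\<^esub> i y) b * i (inv\<^bsub>Mhat\<^esub> y) c))"
proof -
  have "J a b * J (a \<otimes> b) c = (1 / of_nat (card (carrier M))) ^ 2 *
      ((\<Sum>x\<in>characters M. i x a * i (inv\<^bsub>Mhat\<^esub> x) b) *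
       (\<Sum>y\<in>characters M. i y a * (i y b * i (inv\<^bsub>Mhat\<^esub> y) c)))"
    using assms by (simp add: J_eq characters_mult i_in_characters power2_eq_square mult_ac)
  then show ?thesis
    unfolding sum_product using assms by (simp add: mult_dual_group char_mult_apply mult_ac)
qed

lemma sum_J_J_as_pair_sum:
  assumes "b \<in> carrier M" "c \<in> carrier M"
  shows "(\<Sum>a\<in>carrier M. J a b * J (a \<otimes> b) c)
       = (1 / of_nat (card (carrier M))) *
         (\<Sum>(x, y)\<in>{(x, y) \<in> characters M \<times> characters M. i x = inv\<^bsub>Mhat\<^esub> (i y)}.
            (i (inv\<^bsub>Mhat\<^esub> x) \<otimes>\<^bsub>Mhat\<^esub> i y) b * i (inv\<^bsub>Mhat\<^esub> y) c)"
proof -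
  let ?m = "of_nat (card (carrier M)) :: complex"
  let ?K = "\<lambda>x y. (i (inv\<^bsub>Mhat\<^esub> x) \<otimes>\<^bsub>Mhat\<^esub> i y) b * i (inv\<^bsub>Mhat\<^esub> y) c"
  have "(\<Sum>a\<in>carrier M. J a b * J (a \<otimes> b) c)
      = (1 / ?m) ^ 2 * (\<Sum>a\<in>carrier M. \<Sum>x\<in>characters M. \<Sum>y\<in>characters M. (i x a * i y a) * ?K x y)"
    using assms by (simp add: J_mult_J_as_double_sum sum_distrib_left)
  also have "\<dots> = (1 / ?m) ^ 2 * (\<Sum>x\<in>characters M. \<Sum>y\<in>characters M. (\<Sum>a\<in>carrier M. i x a * i y a) * ?K x y)"
    by (simp only: sum.swap[of _ "carrier M" "characters M"] sum_distrib_right)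
  also have "\<dots> = (1 / ?m) * (\<Sum>x\<in>characters M. \<Sum>y\<in>characters M. if i x = inv\<^bsub>Mhat\<^esub> (i y) then ?K x y else 0)"
    using card_carrier_pos unfolding sum_distrib_left
    by (intro sum.cong refl) (simp add: sum_character_mult i_in_characters power2_eq_square)
  also have "\<dots> = (1 / ?m) * (\<Sum>p\<in>characters M \<times> characters M.
      if i (fst p) = inv\<^bsub>Mhat\<^esub> (i (snd p)) then ?K (fst p) (snd p) else 0)"
    by (simp add: sum.cartesian_product case_prod_unfold)
  also have "\<dots> = (1 / ?m) * (\<Sum>p\<in>{p \<in> characters M \<times> characters M. i (fst p) = inv\<^bsub>Mhat\<^esub> (i (snd p))}.
      ?K (fst p) (snd p))"
    by (simp add: sum.inter_filter finite_characters)
  also have "{p \<in> characters M \<times> characters M. i (fst p) = inv\<^bsub>Mhat\<^esub> (i (snd p))}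
      = {(x, y) \<in> characters M \<times> characters M. i x = inv\<^bsub>Mhat\<^esub> (i y)}"
    by auto
  finally show ?thesis
    by (simp add: case_prod_unfold)
qed

lemma sigma_J_as_sum:
  assumes "b \<in> carrier M" "c \<in> carrier M"
  shows "\<sigma> (b \<otimes> c) * J b c = (1 / of_nat (card (carrier M))) *
    (\<Sum>x\<in>characters M. (i x \<otimes>\<^bsub>Mhat\<^esub> \<sigma>) b * (i (inv\<^bsub>Mhat\<^esub> x) \<otimes>\<^bsub>Mhat\<^esub> \<sigma>) c)"
  using assms
  by (simp add: J_eq characters_mult[OF sigma_in_characters] sum_distrib_left mult_dual_group char_mult_apply mult_ac)

lemma fourier_coeff_sum_J_J_count:
  assumes "\<beta> \<in> characters M" "\<gamma> \<in> characters M"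
  shows "fourier_coeff M (\<lambda>b c. \<Sum>a\<in>carrier M. J a b * J (a \<otimes> b) c) \<beta> \<gamma>
       = of_nat (card (carrier M)) * of_nat (card {(y, z) \<in> characters M \<times> characters M.
           i y = inv\<^bsub>Mhat\<^esub> (i z) \<and> i (inv\<^bsub>Mhat\<^esub> y) \<otimes>\<^bsub>Mhat\<^esub> i z = \<beta> \<and> i (inv\<^bsub>Mhat\<^esub> z) = \<gamma>})"
proof -
  let ?m = "of_nat (card (carrier M)) :: complex"
  let ?P = "{(y, z) \<in> characters M \<times> characters M. i y = inv\<^bsub>Mhat\<^esub> (i z)}"
  let ?\<phi> = "\<lambda>(y, z). i (inv\<^bsub>Mhat\<^esub> y) \<otimes>\<^bsub>Mhat\<^esub> i z" and ?\<psi> = "\<lambda>(y, z). i (inv\<^bsub>Mhat\<^esub> z)"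
  have "finite ?P"
    by (rule finite_subset[of _ "characters M \<times> characters M"]) (auto simp: finite_characters)
  have "fourier_coeff M (\<lambda>b c. \<Sum>a\<in>carrier M. J a b * J (a \<otimes> b) c) \<beta> \<gamma>
      = fourier_coeff M (\<lambda>b c. (1 / ?m) * (\<Sum>p\<in>?P. ?\<phi> p b * ?\<psi> p c)) \<beta> \<gamma>"
    by (rule fourier_coeff_cong) (simp add: sum_J_J_as_pair_sum case_prod_unfold)
  also have "\<dots> = (1 / ?m) * (?m ^ 2 * of_nat (card {p \<in> ?P. ?\<phi> p = \<beta> \<and> ?\<psi> p = \<gamma>}))"
    unfolding fourier_coeff_cmult
    by (subst fourier_coeff_character_pairs[OF \<open>finite ?P\<close> _ _ assms]) (auto simp: i_in_characters)
  also have "{p \<in> ?P. ?\<phi> p = \<beta> \<and> ?\<psi> p = \<gamma>} = {(y, z) \<in> characters M \<times> characters M.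
      i y = inv\<^bsub>Mhat\<^esub> (i z) \<and> i (inv\<^bsub>Mhat\<^esub> y) \<otimes>\<^bsub>Mhat\<^esub> i z = \<beta> \<and> i (inv\<^bsub>Mhat\<^esub> z) = \<gamma>}"
    by auto
  finally show ?thesis
    using card_carrier_pos by (simp add: power2_eq_square)
qed

lemma fourier_coeff_sigma_J_count:
  assumes "\<beta> \<in> characters M" "\<gamma> \<in> characters M"
  shows "fourier_coeff M (\<lambda>b c. \<sigma> (b \<otimes> c) * J b c) \<beta> \<gamma>
       = of_nat (card (carrier M)) * of_nat (card {y \<in> characters M.
           i y \<otimes>\<^bsub>Mhat\<^esub> \<sigma> = \<beta> \<and> i (inv\<^bsub>Mhat\<^esub> y) \<otimes>\<^bsub>Mhat\<^esub> \<sigma> = \<gamma>})"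
proof -
  let ?m = "of_nat (card (carrier M)) :: complex"
  have "fourier_coeff M (\<lambda>b c. \<sigma> (b \<otimes> c) * J b c) \<beta> \<gamma>
      = fourier_coeff M (\<lambda>b c. (1 / ?m) * (\<Sum>y\<in>characters M.
          (i y \<otimes>\<^bsub>Mhat\<^esub> \<sigma>) b * (i (inv\<^bsub>Mhat\<^esub> y) \<otimes>\<^bsub>Mhat\<^esub> \<sigma>) c)) \<beta> \<gamma>"
    by (rule fourier_coeff_cong) (simp add: sigma_J_as_sum)
  also have "\<dots> = (1 / ?m) * (?m ^ 2 * of_nat (card {y \<in> characters M.
      i y \<otimes>\<^bsub>Mhat\<^esub> \<sigma> = \<beta> \<and> i (inv\<^bsub>Mhat\<^esub> y) \<otimes>\<^bsub>Mhat\<^esub> \<sigma> = \<gamma>}))"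
    unfolding fourier_coeff_cmult
    by (subst fourier_coeff_character_pairs[OF finite_characters _ _ assms])
       (auto simp: i_in_characters sigma_in_characters)
  finally show ?thesis
    using card_carrier_pos by (simp add: power2_eq_square)
qed

lemma solution_pair_exists:
  assumes x: "x \<in> characters M"
  obtains y z where "y \<in> characters M" "z \<in> characters M" "i y = inv\<^bsub>Mhat\<^esub> (i z)"
    and "i (inv\<^bsub>Mhat\<^esub> y) \<otimes>\<^bsub>Mhat\<^esub> i z = i x \<otimes>\<^bsub>Mhat\<^esub> \<sigma>"
    and "i (inv\<^bsub>Mhat\<^esub> z) = i (inv\<^bsub>Mhat\<^esub> x) \<otimes>\<^bsub>Mhat\<^esub> \<sigma>"
proof -
  let ?\<beta> = "i x \<otimes>\<^bsub>Mhat\<^esub> \<sigma>" and ?\<gamma> = "i (inv\<^bsub>Mhat\<^esub> x) \<otimes>\<^bsub>Mhat\<^esub> \<sigma>"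
  have \<beta>\<gamma>: "?\<beta> \<in> characters M" "?\<gamma> \<in> characters M"
    using x sigma_in_characters i_in_characters by simp_all
  have "card {(y, z) \<in> characters M \<times> characters M.
      i y = inv\<^bsub>Mhat\<^esub> (i z) \<and> i (inv\<^bsub>Mhat\<^esub> y) \<otimes>\<^bsub>Mhat\<^esub> i z = ?\<beta> \<and> i (inv\<^bsub>Mhat\<^esub> z) = ?\<gamma>}
    = card {y \<in> characters M. i y \<otimes>\<^bsub>Mhat\<^esub> \<sigma> = ?\<beta>
        \<and> i (inv\<^bsub>Mhat\<^esub> y) \<otimes>\<^bsub>Mhat\<^esub> \<sigma> = ?\<gamma>}"
    using fourier_coeff_sum_J_J[OF \<beta>\<gamma>] card_carrier_pos
    by (simp add: fourier_coeff_sum_J_J_count[OF \<beta>\<gamma>] fourier_coeff_sigma_J_count[OF \<beta>\<gamma>])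
  also have "\<dots> > 0"
    using x by (subst card_gt_0_iff) (auto simp: finite_characters)
  finally show ?thesis
    using that by (subst (asm) card_gt_0_iff) auto
qed

lemma sigma_eq_one: "\<sigma> = \<one>\<^bsub>Mhat\<^esub>"
proof -
  obtain y z where yz: "y \<in> characters M" "z \<in> characters M" "i y = inv\<^bsub>Mhat\<^esub> (i z)"
    and sigma_sq: "i (inv\<^bsub>Mhat\<^esub> y) \<otimes>\<^bsub>Mhat\<^esub> i z = \<sigma> \<otimes>\<^bsub>Mhat\<^esub> \<sigma>"
    and "i (inv\<^bsub>Mhat\<^esub> z) = i \<sigma>"
    using solution_pair_exists[OF sigma_in_characters] sigma_in_characters i_inv_sigma i_sigma by auto
  then have "z = inv\<^bsub>Mhat\<^esub> \<sigma>"
    using i_eq_iff sigma_in_characters by (metis dual_closed(2) dual.inv_inv carrier_dual_group)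
  then have "y = inv\<^bsub>Mhat\<^esub> \<sigma>"
    using yz i_eq_iff i_inv_sigma sigma_in_characters by (metis dual_closed(2) dual.inv_one)
  with sigma_sq \<open>z = inv\<^bsub>Mhat\<^esub> \<sigma>\<close> show ?thesis
    using sigma_in_characters i_inv_sigma i_sigma by simp
qed

lemma characters_eq_one:
  assumes z: "z \<in> characters M"
  shows "z = \<one>\<^bsub>Mhat\<^esub>"
proof -
  have i_one: "i \<one>\<^bsub>Mhat\<^esub> = \<one>\<^bsub>Mhat\<^esub>"
    using i_inv_sigma by (simp add: sigma_eq_one)
  obtain y w where yw: "y \<in> characters M" "w \<in> characters M" "i y = inv\<^bsub>Mhat\<^esub> (i w)"
    and prod_eq: "i (inv\<^bsub>Mhat\<^esub> y) \<otimes>\<^bsub>Mhat\<^esub> i w = i z" and "i (inv\<^bsub>Mhat\<^esub> w) = i (inv\<^bsub>Mhat\<^esub> z)"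
    using solution_pair_exists[OF z] z i_in_characters by (auto simp: sigma_eq_one)
  then have "w = z"
    using z i_eq_iff by (metis dual_closed(2) dual.inv_inv carrier_dual_group)
  with prod_eq have "i (inv\<^bsub>Mhat\<^esub> y) = \<one>\<^bsub>Mhat\<^esub>"
    using z yw(1) i_inv_in_characters i_in_characters by simp
  then have "y = \<one>\<^bsub>Mhat\<^esub>"
    using i_one i_eq_iff yw(1) by (metis dual_closed(1,2) dual.inv_eq_1_iff carrier_dual_group)
  then show ?thesis
    using yw \<open>w = z\<close> i_one i_eq_iff z i_in_characters by (metis dual_closed(1) dual.inv_eq_1_iff carrier_dual_group)
qed

lemma carrier_trivial: "carrier M = {\<one>}"
proof (rule ccontr)
  assume "carrier M \<noteq> {\<one>}"
  then obtain c where c: "c \<in> carrier M" "c \<noteq> \<one>"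
    by blast
  have "characters M = {\<one>\<^bsub>Mhat\<^esub>}"
    using characters_eq_one by auto
  moreover have "i \<one>\<^bsub>Mhat\<^esub> = \<one>\<^bsub>Mhat\<^esub>"
    using i_inv_sigma by (simp add: sigma_eq_one)
  ultimately have "J a b = 1 / of_nat (card (carrier M))" if "a \<in> carrier M" "b \<in> carrier M" for a b
    using that by (simp add: J_eq one_dual_group_apply)
  then have "1 / of_nat (card (carrier M)) = (1 :: complex)"
    using jacobi_function_constant[OF jacobi _ c] by blast
  then have "card (carrier M) = 1"
    by (simp add: field_simps)
  then show False
    using c by (metis card_1_singletonE one_closed singletonD)
qed

end

theorem mainTheorem13:
  fixes M :: "('a, 'b) monoid_scheme"
    and J :: "'a \<Rightarrow> 'a \<Rightarrow> complex"
    and i :: "('a \<Rightarrow> complex) \<Rightarrow> ('a \<Rightarrow> complex)"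
  assumes "comm_group M"
    and "finite (carrier M)"
    and "jacobi_function M J"
    and "bij_betw i (characters M) (characters M)"
    and "\<forall>x\<in>characters M. i x = char_mult M x (i (char_inv M x))"
    and "\<forall>a\<in>carrier M. \<forall>b\<in>carrier M.
           J a b = (1 / of_nat (card (carrier M))) *
             (\<Sum>x\<in>characters M. i x a * char_mult M (i x) (char_inv M x) b)"
  shows "carrier M = {\<one>\<^bsub>M\<^esub>}"
  by (rule fourier_jacobi.carrier_trivial[OF fourier_jacobi.intro[OF assms]])

end
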